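(* Let $b_0,g_3,z_0$ be complex constants and let $R(z)=\wp(z-z_0;0,g_3)$, so that $R_z^2=4R^3-g_3$. Then the function $$y(z)=-b_0+\frac{R_z}{R}$$ is a solution of the second order ordinary differential equation $$y_{zz}+yy_z-y^3+b_0y_z-3b_0y^2-3b_0^2y-b_0^3=0 .$$
   Context: $\wp(z;g_2,g_3)$ denotes the Weierstrass elliptic function with invariants $g_2,g_3$, the general solution (up to translation of $z$) of $R_z^2-4R^3+g_2R+g_3=0$; subscripts $z$ denote derivatives with respect to $z$. *)

theory Defs
  imports "HOL-Complex_Analysis.Complex_Analysis"
begin

text \<open>Weierstrass-p with invariants g2, g3 is characterised (up to translation) as a
solution of the first-order equation R'^2 = 4 R^3 - g2 R - g3.\<close>

definition weierstrass_sol :: "complex \<Rightarrow> complex \<Rightarrow> (complex \<Rightarrow> complex) \<Rightarrow> complex set \<Rightarrow> bool" where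
  "weierstrass_sol g2 g3 P S \<longleftrightarrow> open S \<and> P holomorphic_on S \<and>
     (\<forall>w\<in>S. (deriv P w)^2 = 4 * (P w)^3 - g2 * P w - g3)"

end

theory Submission
  imports Defs
begin

text \<open>With u = y + b0 = R'/R the equation becomes u'' + u u' - u^3 = 0, and for a logarithmic
derivative u = F'/F one computes u'' + u u' - u^3 = (F''' F - 2 F' F'') / F^2. Differentiating
R'^2 = 4 R^3 - g3 gives R' (R'' - 6 R^2) = 0, so by the identity theorem either R' vanishes near
the point or R'' = 6 R^2 there; in both cases R''' = 12 R R', whence R''' R = 2 R' R''.\<close>

lemma deriv_add_const: "deriv (\<lambda>w. c + f w) = deriv f"
proof -
  have "((\<lambda>w. c + f w) has_field_derivative D) (at z) \<longleftrightarrow> (f has_field_derivative D) (at z)"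
    for D z
    using DERIV_add[OF DERIV_const[of "-c"], of "\<lambda>w. c + f w" D z]
          DERIV_add[OF DERIV_const[of c], of f D z]
    by auto
  then show ?thesis by (simp add: deriv_def fun_eq_iff)
qed

lemma deriv_translate: "deriv (\<lambda>w. f (w - c)) z = deriv f (z - c)"
  by (subst (1 2) deriv_shift_0) (simp add: o_def algebra_simps)

lemma holomorphic_mult_eq_0_on_connected:
  assumes "f holomorphic_on S" "g holomorphic_on S" "open S" "connected S"
    and "\<And>z. z \<in> S \<Longrightarrow> f z * g z = 0"
  shows "(\<forall>z\<in>S. f z = 0) \<or> (\<forall>z\<in>S. g z = 0)"
proof (cases "\<forall>z\<in>S. f z = 0")
  case False
  then obtain w where w: "w \<in> S" "f w \<noteq> 0" by auto
  obtain \<epsilon> where "\<epsilon> > 0" and \<epsilon>: "\<And>z. dist w z < \<epsilon> \<Longrightarrow> f z \<noteq> 0"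
    using continuous_on_open_avoid[OF holomorphic_on_imp_continuous_on[OF assms(1)] assms(3) w]
    by blast
  have "\<forall>z\<in>S. g z = 0"
  proof
    fix z assume "z \<in> S"
    show "g z = 0"
    proof (rule analytic_continuation_open[of "ball w \<epsilon> \<inter> S" S g "\<lambda>_. 0"])
      show "\<And>v. v \<in> ball w \<epsilon> \<inter> S \<Longrightarrow> g v = 0" using \<epsilon> assms(5) by fastforce
      show "ball w \<epsilon> \<inter> S \<noteq> {}" using \<open>\<epsilon> > 0\<close> w(1) by (metis centre_in_ball IntI empty_iff)
    qed (use assms \<open>z \<in> S\<close> in auto)
  qed
  then show ?thesis ..
qed simp

lemma log_deriv_residual:
  fixes F :: "complex \<Rightarrow> complex"
  assumes hol: "F holomorphic_on T" and T: "open T" and z: "z \<in> T" and nz: "F z \<noteq> 0"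
  defines "u \<equiv> \<lambda>w. deriv F w / F w"
  shows "deriv (deriv u) z + u z * deriv u z - (u z)^3
           = (deriv (deriv (deriv F)) z * F z - 2 * deriv F z * deriv (deriv F) z) / (F z)^2"
proof -
  define F1 F2 F3 where "F1 = deriv F" and "F2 = deriv F1" and "F3 = deriv F2"
  have DF: "(F has_field_derivative F1 w) (at w)" "(F1 has_field_derivative F2 w) (at w)"
    "(F2 has_field_derivative F3 w) (at w)" if "w \<in> T" for w
    unfolding F1_def F2_def F3_def using hol T that
    by (auto intro!: holomorphic_derivI holomorphic_deriv)
  have "isCont F z"
    using hol T z continuous_on_eq_continuous_at holomorphic_on_imp_continuous_on by blast
  then have "eventually (\<lambda>w. F w \<noteq> 0) (nhds z)"
    using nz by (intro tendsto_imp_eventually_ne) (auto simp: isCont_def tendsto_at_iff_tendsto_nhds)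
  then have near: "eventually (\<lambda>w. w \<in> T \<and> F w \<noteq> 0) (nhds z)"
    using eventually_nhds_in_open[OF T z] by eventually_elim simp
  define Du where "Du = (\<lambda>w. (F2 w * F w - (F1 w)^2) / (F w)^2)"
  have deriv_u: "eventually (\<lambda>w. deriv u w = Du w) (nhds z)"
    using near proof eventually_elim
    case (elim w)
    then show ?case
      unfolding u_def Du_def F1_def[symmetric]
      using DF(1,2)[of w]
      by (intro DERIV_imp_deriv) (auto intro!: derivative_eq_intros simp: power2_eq_square)
  qed
  have "deriv (deriv u) z = deriv Du z"
    using deriv_u by (rule deriv_cong_ev) simp
  also have "\<dots> = ((F3 z * F z - F1 z * F2 z) * (F z)^2
                   - (F2 z * F z - (F1 z)^2) * (2 * F z * F1 z)) / ((F z)^2)^2"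
    unfolding Du_def using DF[OF z] nz
    by (intro DERIV_imp_deriv) (auto intro!: derivative_eq_intros simp: power2_eq_square algebra_simps)
  finally show ?thesis
    using eventually_nhds_x_imp_x[OF deriv_u] nz
    by (simp add: u_def F1_def[symmetric] F2_def[symmetric] F3_def[symmetric])
       (simp add: Du_def field_simps power2_eq_square power3_eq_cube power4_eq_xxxx)
qed

lemma weierstrass_sol_translate:
  assumes "weierstrass_sol g2 g3 P S"
  shows "weierstrass_sol g2 g3 (\<lambda>w. P (w - c)) ((\<lambda>w. w - c) -` S)"
proof -
  have S: "open S" "P holomorphic_on S"
    and eq: "\<And>w. w \<in> S \<Longrightarrow> (deriv P w)^2 = 4 * (P w)^3 - g2 * P w - g3"
    using assms by (auto simp: weierstrass_sol_def)
  have "open ((\<lambda>w. w - c) -` S)"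
    by (rule continuous_open_vimage[OF S(1)]) (auto intro: continuous_intros)
  moreover have "(\<lambda>w. P (w - c)) holomorphic_on (\<lambda>w. w - c) -` S"
    by (rule holomorphic_on_compose_gen[of "\<lambda>w. w - c" _ P S, unfolded o_def])
       (use S in \<open>auto intro: holomorphic_intros\<close>)
  ultimately show ?thesis
    using eq by (simp add: weierstrass_sol_def deriv_translate)
qed

lemma weierstrass_sol_deriv2:
  assumes "weierstrass_sol g2 g3 P S" and w: "w \<in> S"
  shows "deriv P w * (2 * deriv (deriv P) w - 12 * (P w)^2 + g2) = 0"
proof -
  have S: "open S" and hol: "P holomorphic_on S"
    and eq: "\<And>w. w \<in> S \<Longrightarrow> (deriv P w)^2 - 4 * (P w)^3 + g2 * P w = - g3"
    using assms by (auto simp: weierstrass_sol_def)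
  have "((\<lambda>v. (deriv P v)^2 - 4 * (P v)^3 + g2 * P v) has_field_derivative
          deriv P w * (2 * deriv (deriv P) w - 12 * (P w)^2 + g2)) (at w)"
    using holomorphic_derivI[OF hol S w] holomorphic_derivI[OF holomorphic_deriv[OF hol S] S w]
    by (auto intro!: derivative_eq_intros simp: algebra_simps)
  moreover have "((\<lambda>v. (deriv P v)^2 - 4 * (P v)^3 + g2 * P v) has_field_derivative 0) (at w)"
    by (rule has_field_derivative_transform_within_open[OF DERIV_const S w]) (simp add: eq)
  ultimately show ?thesis
    using DERIV_unique by blast
qed

lemma weierstrass_sol_deriv3:
  assumes sol: "weierstrass_sol g2 g3 P S" and w: "w \<in> S"
  shows "deriv (deriv (deriv P)) w = 12 * P w * deriv P w"
proof -
  have S: "open S" and hol: "P holomorphic_on S"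
    using sol by (auto simp: weierstrass_sol_def)
  obtain r where "r > 0" and B: "ball w r \<subseteq> S"
    using S w open_contains_ball by blast
  have hol_B: "P holomorphic_on ball w r" "deriv P holomorphic_on ball w r"
    "deriv (deriv P) holomorphic_on ball w r"
    using B hol S by (auto intro!: holomorphic_deriv intro: holomorphic_on_subset)
  have "(\<forall>v\<in>ball w r. deriv P v = 0) \<or>
        (\<forall>v\<in>ball w r. 2 * deriv (deriv P) v - 12 * (P v)^2 + g2 = 0)"
    using weierstrass_sol_deriv2[OF sol subsetD[OF B]]
    by (intro holomorphic_mult_eq_0_on_connected hol_B holomorphic_intros) auto
  \<comment> \<open>The constant solutions, at roots of 4x^3 - g2 x - g3, need not satisfy P'' = 6 P^2 - g2/2.\<close>
  then consider (locally_constant) "\<forall>v\<in>ball w r. deriv P v = 0"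
    | (second_order) "\<forall>v\<in>ball w r. deriv (deriv P) v = 6 * (P v)^2 - g2 / 2"
    by (auto simp: field_simps)
  then show ?thesis
  proof cases
    case locally_constant
    then have "eventually (\<lambda>v. deriv P v = (\<lambda>_. 0) v) (nhds w)"
      using \<open>r > 0\<close> by (auto simp: eventually_nhds intro!: exI[of _ "ball w r"])
    then have "(deriv ^^ 2) (deriv P) w = (deriv ^^ 2) (\<lambda>_. 0) w"
      by (rule higher_deriv_cong_ev) simp
    then show ?thesis
      using locally_constant \<open>r > 0\<close> by (simp add: numeral_2_eq_2)
  next
    case second_order
    then have "eventually (\<lambda>v. deriv (deriv P) v = 6 * (P v)^2 - g2 / 2) (nhds w)"
      using \<open>r > 0\<close> by (auto simp: eventually_nhds intro!: exI[of _ "ball w r"])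
    then have "deriv (deriv (deriv P)) w = deriv (\<lambda>v. 6 * (P v)^2 - g2 / 2) w"
      by (rule deriv_cong_ev) simp
    also have "\<dots> = 12 * P w * deriv P w"
      using holomorphic_derivI[OF hol S w]
      by (auto intro!: DERIV_imp_deriv derivative_eq_intros)
    finally show ?thesis .
  qed
qed

theorem mainTheorem2:
  fixes b0 g3 z0 :: complex and P :: "complex \<Rightarrow> complex" and S :: "complex set"
    and z :: complex
  assumes "weierstrass_sol 0 g3 P S"
    and "z - z0 \<in> S" and "P (z - z0) \<noteq> 0"
  defines "R \<equiv> (\<lambda>w. P (w - z0))"
  defines "y \<equiv> (\<lambda>w. - b0 + deriv R w / R w)"
  shows "deriv (deriv y) z + y z * deriv y z - (y z)^3 + b0 * deriv y z
           - 3 * b0 * (y z)^2 - 3 * b0^2 * y z - b0^3 = 0"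
proof -
  define T where "T = (\<lambda>w. w - z0) -` S"
  define u where "u = (\<lambda>w. deriv R w / R w)"
  have sol: "weierstrass_sol 0 g3 R T"
    unfolding R_def T_def by (rule weierstrass_sol_translate[OF assms(1)])
  have z: "z \<in> T" and nz: "R z \<noteq> 0"
    using assms(2,3) by (simp_all add: T_def R_def)
  have "deriv (deriv (deriv R)) z * R z = 2 * deriv R z * deriv (deriv R) z"
    using weierstrass_sol_deriv3[OF sol z] weierstrass_sol_deriv2[OF sol z] by algebra
  then have residual: "deriv (deriv u) z + u z * deriv u z - (u z)^3 = 0"
    using log_deriv_residual[of R T z] sol z nz by (simp add: weierstrass_sol_def u_def)
  have y_u: "y = (\<lambda>w. - b0 + u w)"
    unfolding y_def u_def ..
  have dy: "deriv y = deriv u"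
    unfolding y_u by (rule deriv_add_const)
  show ?thesis
    unfolding dy unfolding y_u using residual by algebra
qed

end
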